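(* Let $x\in(0,\pi/2)$, $p\in\mathbb{R}$, and consider the double inequality \[ \frac{1-(\cos x)^{q_2}}{3q_2}<\frac{1-\left(\frac{\sin x}{x}\right)^{p}}{p}<\frac{1-(\cos x)^{q_1}}{3q_1}. \tag{$*$} \] (i) If $p\ge \frac{\pi^2}{4}-1$, then $( * )$ holds for $q_2\ge \frac p3+\frac8{15}$ and $q_1\le 1$. (ii) If $p\in[\frac75,\frac{\pi^2}{4}-1)$, then $( * )$ holds for $q_2\ge \frac p3+\frac8{15}$ and $q_1\le \frac{34}{35}$. (iii) If $p\in[\frac{46}{35},\frac75)$, then $( * )$ holds for $q_2\ge 1$ and $q_1\le\frac{34}{35}$. (iv) If $p<\frac{46}{35}$, then $( * )$ holds for $q_2\ge1$ and $q_1\le \frac p3+\frac8{15}$.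
   Context: When $p=0$, $\frac{1-(\sin x/x)^p}{p}$ means $-\ln\frac{\sin x}{x}$; when $q_i=0$, $\frac{1-(\cos x)^{q_i}}{3q_i}$ means $-\frac13\ln\cos x$ (the limits of these expressions). *)

theory Defs
  imports Complex_Main
begin

definition Fsin :: "real \<Rightarrow> real \<Rightarrow> real" where
  "Fsin p x = (if p = 0 then - ln (sin x / x) else (1 - (sin x / x) powr p) / p)"

definition Gcos :: "real \<Rightarrow> real \<Rightarrow> real" where
  "Gcos q x = (if q = 0 then - ln (cos x) / 3 else (1 - (cos x) powr q) / (3 * q))"

definition double_ineq :: "real \<Rightarrow> real \<Rightarrow> real \<Rightarrow> real \<Rightarrow> bool" where
  "double_ineq p q1 q2 x \<longleftrightarrow> Gcos q2 x < Fsin p x \<and> Fsin p x < Gcos q1 x"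

end

theory Submission
  imports Defs "HOL-Analysis.Complex_Transcendental" "HOL-Real_Asymp.Real_Asymp"
begin

text \<open>Write \<open>a = -ln (sin x / x)\<close>, \<open>b = -ln (cos x)\<close> and
  \<open>\<Phi>\<^sub>p(t) = (1 - exp (-p t)) / p\<close>; then the middle term of the double inequality is
  \<open>\<Phi>\<^sub>p(a)\<close> and the outer terms are \<open>\<Phi>\<^sub>q(b) / 3\<close>. All of them vanish at \<open>0\<^sup>+\<close>, so it suffices
  to compare derivatives, and the logarithm of the ratio of the derivatives is
  \<open>l - (p - 1) a + (q - 1) b\<close> with \<open>l = ln (3 (sin x - x cos x) / (x\<^sup>2 sin x))\<close>.
  The four ranges of \<open>p\<close> are handled by linear combinations of the four inequalities
  \<open>2/5 a < l\<close>, \<open>35 l < 11 a + b\<close>, \<open>l < (\<pi>\<^sup>2/4 - 2) a\<close> and \<open>3 a < b\<close> on \<open>(0, \<pi>/2)\<close>, and the outer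
  terms are decreasing in \<open>q\<close>. The four inequalities are again proved by comparing
  derivatives; the resulting trigonometric polynomials are shown positive by repeated
  differentiation, except for the third one: there the numerator is bounded by Taylor
  polynomials for \<open>x \<le> 37/25\<close>, and on \<open>[37/25, \<pi>/2]\<close> it decreases to its value \<open>0\<close> at \<open>\<pi>/2\<close>.\<close>

section \<open>Taylor bounds and positivity from the derivative\<close>

lemma sin_le_Maclaurin_sum:
  assumes "0 \<le> x" "x \<le> pi"
  shows "sin x \<le> (\<Sum>m<4*k+2. sin_coeff m * x ^ m)"
proof (cases "x = 0")
  case False
  then obtain t where t: "0 < t" "t \<le> x"
    and sin_x: "sin x = (\<Sum>m<4*k+2. sin_coeff m * x ^ m) + sin (t + 1/2 * real (4*k+2) * pi) / fact (4*k+2) * x ^ (4*k+2)"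
    using Maclaurin_sin_expansion4[of x "4*k+2"] assms by auto
  have shift: "t + 1/2 * real (4*k+2) * pi = (t + pi) + 2 * real k * pi" by (simp add: algebra_simps)
  have "sin (t + 1/2 * real (4*k+2) * pi) = - sin t" by (subst shift) (simp add: sin_add)
  moreover have "0 \<le> sin t" using t assms by (intro sin_ge_zero) auto
  ultimately show ?thesis using sin_x assms by (simp add: mult_nonneg_nonneg)
qed (simp add: sin_coeff_def)

lemma cos_le_Maclaurin_sum:
  assumes "0 \<le> x" "x \<le> pi"
  shows "cos x \<le> (\<Sum>m<4*k+1. cos_coeff m * x ^ m)"
proof (cases "x = 0")
  case False
  then obtain t where t: "0 < t" "t < x"
    and cos_x: "cos x = (\<Sum>m<4*k+1. cos_coeff m * x ^ m) + cos (t + 1/2 * real (4*k+1) * pi) / fact (4*k+1) * x ^ (4*k+1)"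
    using Maclaurin_cos_expansion2[of x "4*k+1"] assms by auto
  have shift: "t + 1/2 * real (4*k+1) * pi = (t + pi/2) + 2 * real k * pi" by (simp add: algebra_simps)
  have "cos (t + 1/2 * real (4*k+1) * pi) = - sin t" by (subst shift) (simp add: cos_add)
  moreover have "0 \<le> sin t" using t assms by (intro sin_ge_zero) auto
  ultimately show ?thesis using cos_x assms by simp
qed simp

lemma cos_ge_Maclaurin_sum:
  assumes "0 \<le> x" "x \<le> pi"
  shows "(\<Sum>m<4*k+3. cos_coeff m * x ^ m) \<le> cos x"
proof (cases "x = 0")
  case False
  then obtain t where t: "0 < t" "t < x"
    and cos_x: "cos x = (\<Sum>m<4*k+3. cos_coeff m * x ^ m) + cos (t + 1/2 * real (4*k+3) * pi) / fact (4*k+3) * x ^ (4*k+3)"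
    using Maclaurin_cos_expansion2[of x "4*k+3"] assms by auto
  have shift: "t + 1/2 * real (4*k+3) * pi = (t + pi + pi/2) + 2 * real k * pi" by (simp add: algebra_simps)
  have "cos (t + 1/2 * real (4*k+3) * pi) = sin t"
    unfolding shift by (simp only: cos_add sin_add cos_periodic_pi sin_periodic_pi cos_pi_half sin_pi_half cos_2npi sin_2npi) simp
  moreover have "0 \<le> sin t" using t assms by (intro sin_ge_zero) auto
  ultimately show ?thesis using cos_x assms by simp
qed simp

lemma DERIV_pos_tendsto_0_imp_pos:
  fixes f f' :: "real \<Rightarrow> real"
  assumes x: "0 < x" "x < X"
    and pos: "\<And>y. 0 < y \<Longrightarrow> y < X \<Longrightarrow> 0 < f' y"
    and deriv: "\<And>y. 0 < y \<Longrightarrow> y < X \<Longrightarrow> (f has_real_derivative f' y) (at y)"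
    and lim: "(f \<longlongrightarrow> 0) (at_right 0)"
  shows "0 < f x"
proof -
  have mono: "f u < f v" if "0 < u" "u < v" "v < X" for u v
  proof (rule DERIV_pos_imp_increasing_open[OF \<open>u < v\<close>])
    show "\<And>y. u < y \<Longrightarrow> y < v \<Longrightarrow> \<exists>z. (f has_real_derivative z) (at y) \<and> 0 < z"
      using deriv pos that by (meson less_trans)
    show "continuous_on {u..v} f"
      using deriv that by (intro DERIV_continuous_on[of _ _ f']) (auto intro: has_field_derivative_at_within)
  qed
  have "eventually (\<lambda>y. f y \<le> f (x/2)) (at_right 0)"
    unfolding eventually_at_right_field using x
    by (intro exI[of _ "x/2"]) (auto intro!: less_imp_le[OF mono])
  then have "0 \<le> f (x/2)"
    using lim by (intro tendsto_upperbound[of f 0]) auto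
  also have "f (x/2) < f x" using x by (intro mono) auto
  finally show ?thesis .
qed

lemma DERIV_pos_isCont_0_imp_pos:
  fixes f f' :: "real \<Rightarrow> real"
  assumes "0 < x" "x < X"
    and "\<And>y. 0 < y \<Longrightarrow> y < X \<Longrightarrow> 0 < f' y"
    and "\<And>y. 0 < y \<Longrightarrow> y < X \<Longrightarrow> (f has_real_derivative f' y) (at y)"
    and "isCont f 0" "f 0 = 0"
  shows "0 < f x"
proof (rule DERIV_pos_tendsto_0_imp_pos[OF assms(1-4)])
  have "(f \<longlongrightarrow> f 0) (at 0)" using \<open>isCont f 0\<close> by (simp add: isCont_def)
  then show "(f \<longlongrightarrow> 0) (at_right 0)" using \<open>f 0 = 0\<close> by (auto intro: tendsto_mono[OF at_le])
qed

section \<open>Trigonometric inequalities on \<open>(0, \<pi>)\<close>\<close>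

lemma x_cos_less_sin:
  assumes "0 < x" "x < pi" shows "x * cos x < sin x"
proof -
  have "0 < sin x - x * cos x"
  proof (rule DERIV_pos_isCont_0_imp_pos[OF assms, where f = "\<lambda>x. sin x - x * cos x"])
    fix y :: real assume "0 < y" "y < pi"
    then show "0 < y * sin y" by (simp add: sin_gt_zero)
    show "((\<lambda>x. sin x - x * cos x) has_real_derivative y * sin y) (at y)"
      by (auto intro!: derivative_eq_intros)
  qed (auto intro!: continuous_intros)
  then show ?thesis by simp
qed

lemma cusa_huygens:
  assumes "0 < u" "u < pi" shows "3 * sin u < 2 * u + u * cos u"
proof -
  have deriv_pos: "0 < 2 - 2 * cos v - v * sin v" if "0 < v" "v < pi" for v
  proof (rule DERIV_pos_isCont_0_imp_pos[OF that, where f = "\<lambda>v. 2 - 2 * cos v - v * sin v"])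
    fix y :: real assume "0 < y" "y < pi"
    then show "0 < sin y - y * cos y" using x_cos_less_sin by simp
    show "((\<lambda>v. 2 - 2 * cos v - v * sin v) has_real_derivative sin y - y * cos y) (at y)"
      by (rule derivative_eq_intros refl | simp add: algebra_simps)+
  qed (auto intro!: continuous_intros)
  have "0 < 2 * u - 3 * sin u + u * cos u"
  proof (rule DERIV_pos_isCont_0_imp_pos[OF assms, where f = "\<lambda>u. 2 * u - 3 * sin u + u * cos u"])
    fix y :: real assume "0 < y" "y < pi"
    then show "0 < 2 - 2 * cos y - y * sin y" by (rule deriv_pos)
    show "((\<lambda>u. 2 * u - 3 * sin u + u * cos u) has_real_derivative 2 - 2 * cos y - y * sin y) (at y)"
      by (rule derivative_eq_intros refl | simp add: algebra_simps)+
  qed (auto intro!: continuous_intros)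
  then show ?thesis by simp
qed

lemma fifteen_sin_less:
  assumes "0 < u" "u < pi" shows "15 * sin u < 8 * u + 7 * u * cos u + u\<^sup>2 * sin u"
proof -
  have second_deriv_pos: "0 < 3 * sin v - 3 * v * cos v - v\<^sup>2 * sin v" if "0 < v" "v < pi" for v
  proof (rule DERIV_pos_isCont_0_imp_pos[OF that, where f = "\<lambda>v. 3 * sin v - 3 * v * cos v - v\<^sup>2 * sin v"])
    fix y :: real assume "0 < y" "y < pi"
    then show "0 < y * (sin y - y * cos y)" using x_cos_less_sin by simp
    show "((\<lambda>v. 3 * sin v - 3 * v * cos v - v\<^sup>2 * sin v) has_real_derivative y * (sin y - y * cos y)) (at y)"
      by (rule derivative_eq_intros refl | simp add: algebra_simps power2_eq_square)+
  qed (auto intro!: continuous_intros)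
  have deriv_pos: "0 < 8 - 8 * cos v - 5 * v * sin v + v\<^sup>2 * cos v" if "0 < v" "v < pi" for v
  proof (rule DERIV_pos_isCont_0_imp_pos[OF that, where f = "\<lambda>v. 8 - 8 * cos v - 5 * v * sin v + v\<^sup>2 * cos v"])
    fix y :: real assume "0 < y" "y < pi"
    then show "0 < 3 * sin y - 3 * y * cos y - y\<^sup>2 * sin y" by (rule second_deriv_pos)
    show "((\<lambda>v. 8 - 8 * cos v - 5 * v * sin v + v\<^sup>2 * cos v) has_real_derivative 3 * sin y - 3 * y * cos y - y\<^sup>2 * sin y) (at y)"
      by (rule derivative_eq_intros refl | simp add: algebra_simps power2_eq_square)+
  qed (auto intro!: continuous_intros)
  have "0 < 8 * u - 15 * sin u + 7 * u * cos u + u\<^sup>2 * sin u"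
  proof (rule DERIV_pos_isCont_0_imp_pos[OF assms, where f = "\<lambda>u. 8 * u - 15 * sin u + 7 * u * cos u + u\<^sup>2 * sin u"])
    fix y :: real assume "0 < y" "y < pi"
    then show "0 < 8 - 8 * cos y - 5 * y * sin y + y\<^sup>2 * cos y" by (rule deriv_pos)
    show "((\<lambda>u. 8 * u - 15 * sin u + 7 * u * cos u + u\<^sup>2 * sin u) has_real_derivative 8 - 8 * cos y - 5 * y * sin y + y\<^sup>2 * cos y) (at y)"
      by (rule derivative_eq_intros refl | simp add: algebra_simps power2_eq_square)+
  qed (auto intro!: continuous_intros)
  then show ?thesis by simp
qed

lemma one_minus_cos_less:
  assumes "0 < u" "u < pi" shows "24 * (1 - cos u) < 4 * u\<^sup>2 + 9 * u * sin u - u\<^sup>2 * cos u"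
proof -
  have "0 < 4 * u\<^sup>2 - 24 + 24 * cos u + 9 * u * sin u - u\<^sup>2 * cos u"
  proof (rule DERIV_pos_isCont_0_imp_pos[OF assms, where f = "\<lambda>u. 4 * u\<^sup>2 - 24 + 24 * cos u + 9 * u * sin u - u\<^sup>2 * cos u"])
    fix y :: real assume "0 < y" "y < pi"
    then show "0 < 8 * y - 15 * sin y + 7 * y * cos y + y\<^sup>2 * sin y" using fifteen_sin_less[of y] by simp
    show "((\<lambda>u. 4 * u\<^sup>2 - 24 + 24 * cos u + 9 * u * sin u - u\<^sup>2 * cos u) has_real_derivative
        8 * y - 15 * sin y + 7 * y * cos y + y\<^sup>2 * sin y) (at y)"
      by (rule derivative_eq_intros refl | simp add: algebra_simps power2_eq_square)+
  qed (auto intro!: continuous_intros)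
  then show ?thesis by (simp add: algebra_simps)
qed

section \<open>Inequalities between the logarithmic functions\<close>

definition sin_minus_x_cos :: "real \<Rightarrow> real" where
  "sin_minus_x_cos y = sin y - y * cos y"

definition neg_ln_sinc :: "real \<Rightarrow> real" where
  "neg_ln_sinc y = ln y - ln (sin y)"

definition neg_ln_cos :: "real \<Rightarrow> real" where
  "neg_ln_cos y = - ln (cos y)"

text \<open>The logarithm of the ratio of the derivatives of \<open>1 - sin y / y\<close> and \<open>(1 - cos y) / 3\<close>,
  i.e. of \<open>3 (sin y - y cos y) / (y\<^sup>2 sin y)\<close>.\<close>
definition ln_deriv_ratio :: "real \<Rightarrow> real" where
  "ln_deriv_ratio y = ln 3 + ln (sin_minus_x_cos y) - 2 * ln y - ln (sin y)"

lemma quarter_period_pos: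
  assumes "0 < y" "y < pi/2"
  shows "0 < sin y" "0 < cos y" "0 < sin_minus_x_cos y"
  using assms x_cos_less_sin[of y] by (auto intro!: sin_gt_zero cos_gt_zero simp: sin_minus_x_cos_def)

lemma neg_ln_sinc_nonneg: "0 < x \<Longrightarrow> x < pi/2 \<Longrightarrow> 0 \<le> neg_ln_sinc x"
  using quarter_period_pos[of x] sin_x_le_x[of x] unfolding neg_ln_sinc_def by simp

lemma neg_ln_cos_nonneg: "0 < x \<Longrightarrow> x < pi/2 \<Longrightarrow> 0 \<le> neg_ln_cos x"
  using quarter_period_pos[of x] unfolding neg_ln_cos_def by simp

lemma DERIV_neg_ln_sinc:
  assumes "0 < y" "y < pi/2"
  shows "(neg_ln_sinc has_real_derivative sin_minus_x_cos y / (y * sin y)) (at y)"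
  unfolding neg_ln_sinc_def
  using assms quarter_period_pos[OF assms]
  by (auto intro!: derivative_eq_intros simp: sin_minus_x_cos_def field_simps)

lemma DERIV_neg_ln_cos:
  assumes "0 < y" "y < pi/2"
  shows "(neg_ln_cos has_real_derivative sin y / cos y) (at y)"
  unfolding neg_ln_cos_def
  using assms quarter_period_pos[OF assms] by (auto intro!: derivative_eq_intros)

lemma DERIV_ln_deriv_ratio:
  assumes "0 < y" "y < pi/2"
  shows "(ln_deriv_ratio has_real_derivative y * sin y / sin_minus_x_cos y - 2 / y - cos y / sin y) (at y)"
  unfolding ln_deriv_ratio_def sin_minus_x_cos_def
  using assms quarter_period_pos[OF assms, unfolded sin_minus_x_cos_def]
  by (auto intro!: derivative_eq_intros)

lemma neg_ln_sinc_tendsto_0: "(neg_ln_sinc \<longlongrightarrow> 0) (at_right 0)"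
  unfolding neg_ln_sinc_def by real_asymp

lemma neg_ln_cos_tendsto_0: "(neg_ln_cos \<longlongrightarrow> 0) (at_right 0)"
  unfolding neg_ln_cos_def by real_asymp

lemma ln_deriv_ratio_tendsto_0: "(ln_deriv_ratio \<longlongrightarrow> 0) (at_right 0)"
proof -
  have "((\<lambda>y::real. 3 * (sin y - y * cos y) / (y\<^sup>2 * sin y)) \<longlongrightarrow> 1) (at_right 0)"
    by real_asymp
  then have "((\<lambda>y::real. ln (3 * sin_minus_x_cos y / (y\<^sup>2 * sin y))) \<longlongrightarrow> ln 1) (at_right 0)"
    unfolding sin_minus_x_cos_def by (rule tendsto_ln) simp
  moreover have "eventually (\<lambda>y::real. ln (3 * sin_minus_x_cos y / (y\<^sup>2 * sin y)) = ln_deriv_ratio y) (at_right 0)"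
    unfolding eventually_at_right_field
  proof (intro exI[of _ "pi/2"] conjI allI impI)
    fix y :: real assume "0 < y" "y < pi/2"
    then show "ln (3 * sin_minus_x_cos y / (y\<^sup>2 * sin y)) = ln_deriv_ratio y"
      using quarter_period_pos[of y]
      by (simp add: ln_deriv_ratio_def ln_div ln_mult ln_realpow)
  qed simp
  ultimately show ?thesis by (simp add: tendsto_cong)
qed

lemma ln_deriv_ratio_gt:
  assumes "0 < x" "x < pi/2" shows "2/5 * neg_ln_sinc x < ln_deriv_ratio x"
proof -
  have "0 < ln_deriv_ratio x - 2/5 * neg_ln_sinc x"
  proof (rule DERIV_pos_tendsto_0_imp_pos[OF assms])
    fix y :: real assume y: "0 < y" "y < pi/2"
    note pos = quarter_period_pos[OF y]
    show "((\<lambda>y. ln_deriv_ratio y - 2/5 * neg_ln_sinc y) has_real_derivative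
        (y * sin y / sin_minus_x_cos y - 2 / y - cos y / sin y) - 2/5 * (sin_minus_x_cos y / (y * sin y))) (at y)"
      by (intro DERIV_diff DERIV_cmult DERIV_ln_deriv_ratio DERIV_neg_ln_sinc y)
    have "(y * sin y / sin_minus_x_cos y - 2 / y - cos y / sin y) - 2/5 * (sin_minus_x_cos y / (y * sin y))
      = (4 * (2*y)\<^sup>2 - 24 + 24 * cos (2*y) + 9 * (2*y) * sin (2*y) - (2*y)\<^sup>2 * cos (2*y))
        / (20 * y * sin_minus_x_cos y * sin y)"
      using pos y unfolding sin_double cos_double
      apply (simp add: field_simps)
      unfolding sin_minus_x_cos_def using sin_cos_squared_add[of y] by algebra
    moreover have "0 < 4 * (2*y)\<^sup>2 - 24 + 24 * cos (2*y) + 9 * (2*y) * sin (2*y) - (2*y)\<^sup>2 * cos (2*y)"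
      using one_minus_cos_less[of "2*y"] y by simp
    ultimately show "0 < (y * sin y / sin_minus_x_cos y - 2 / y - cos y / sin y)
        - 2/5 * (sin_minus_x_cos y / (y * sin y))"
      using pos y by simp
  next
    show "((\<lambda>y. ln_deriv_ratio y - 2/5 * neg_ln_sinc y) \<longlongrightarrow> 0) (at_right 0)"
      using tendsto_diff[OF ln_deriv_ratio_tendsto_0 tendsto_mult[OF tendsto_const neg_ln_sinc_tendsto_0, of "2/5"]]
      by simp
  qed
  then show ?thesis by simp
qed

lemma ln_deriv_ratio_upper_num_pos:
  assumes "0 < x" "x < pi/2"
  shows "0 < 81 * sin x ^ 2 * cos x - 57 * x * sin x + 58 * x * sin x ^ 3 - 24 * x\<^sup>2 * cos x
    - 12 * x\<^sup>2 * sin x ^ 2 * cos x"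
proof -
  have B1: "0 < 105 * sin v - 185 * sin v ^ 3 - 105 * v * cos v + 150 * v * sin v ^ 2 * cos v
      + 36 * v\<^sup>2 * sin v ^ 3" if "0 < v" "v < pi/2" for v
  proof (rule DERIV_pos_isCont_0_imp_pos[OF that, where f = "\<lambda>v. 105 * sin v - 185 * sin v ^ 3
      - 105 * v * cos v + 150 * v * sin v ^ 2 * cos v + 36 * v\<^sup>2 * sin v ^ 3"])
    fix y :: real assume y: "0 < y" "y < pi/2"
    then show "0 < 27/2 * sin y * (16 * y - 15 * sin (2*y) + 14 * y * cos (2*y) + (2*y)\<^sup>2 * sin (2*y))"
      using fifteen_sin_less[of "2*y"] sin_gt_zero[of y] by simp
    show "((\<lambda>v. 105 * sin v - 185 * sin v ^ 3 - 105 * v * cos v + 150 * v * sin v ^ 2 * cos v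
        + 36 * v\<^sup>2 * sin v ^ 3) has_real_derivative
        27/2 * sin y * (16 * y - 15 * sin (2*y) + 14 * y * cos (2*y) + (2*y)\<^sup>2 * sin (2*y))) (at y)"
      apply (rule derivative_eq_intros refl | simp)+
      unfolding sin_double cos_double using sin_cos_squared_add[of y] by algebra
  qed (auto intro!: continuous_intros)
  show ?thesis
  proof (rule DERIV_pos_isCont_0_imp_pos[OF assms, where f = "\<lambda>x. 81 * sin x ^ 2 * cos x
      - 57 * x * sin x + 58 * x * sin x ^ 3 - 24 * x\<^sup>2 * cos x - 12 * x\<^sup>2 * sin x ^ 2 * cos x"])
    fix y :: real assume "0 < y" "y < pi/2"
    then show "0 < 105 * sin y - 185 * sin y ^ 3 - 105 * y * cos y + 150 * y * sin y ^ 2 * cos y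
      + 36 * y\<^sup>2 * sin y ^ 3" by (rule B1)
    show "((\<lambda>x. 81 * sin x ^ 2 * cos x - 57 * x * sin x + 58 * x * sin x ^ 3 - 24 * x\<^sup>2 * cos x
        - 12 * x\<^sup>2 * sin x ^ 2 * cos x) has_real_derivative 105 * sin y - 185 * sin y ^ 3
        - 105 * y * cos y + 150 * y * sin y ^ 2 * cos y + 36 * y\<^sup>2 * sin y ^ 3) (at y)"
      apply (rule derivative_eq_intros refl | simp)+
      using sin_cos_squared_add[of y] by algebra
  qed (auto intro!: continuous_intros)
qed

lemma ln_deriv_ratio_lt:
  assumes "0 < x" "x < pi/2" shows "35 * ln_deriv_ratio x < 11 * neg_ln_sinc x + neg_ln_cos x"
proof -
  have "0 < neg_ln_cos x + 11 * neg_ln_sinc x - 35 * ln_deriv_ratio x"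
  proof (rule DERIV_pos_tendsto_0_imp_pos[OF assms])
    fix y :: real assume y: "0 < y" "y < pi/2"
    note pos = quarter_period_pos[OF y]
    show "((\<lambda>y. neg_ln_cos y + 11 * neg_ln_sinc y - 35 * ln_deriv_ratio y) has_real_derivative
        sin y / cos y + 11 * (sin_minus_x_cos y / (y * sin y))
        - 35 * (y * sin y / sin_minus_x_cos y - 2 / y - cos y / sin y)) (at y)"
      by (intro DERIV_diff DERIV_add DERIV_cmult DERIV_neg_ln_cos DERIV_ln_deriv_ratio DERIV_neg_ln_sinc y)
    have "sin y / cos y + 11 * (sin_minus_x_cos y / (y * sin y))
        - 35 * (y * sin y / sin_minus_x_cos y - 2 / y - cos y / sin y)
      = (81 * sin y ^ 2 * cos y - 57 * y * sin y + 58 * y * sin y ^ 3 - 24 * y\<^sup>2 * cos y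
          - 12 * y\<^sup>2 * sin y ^ 2 * cos y) / (y * sin_minus_x_cos y * sin y * cos y)"
      using pos y
      apply (simp add: field_simps)
      unfolding sin_minus_x_cos_def using sin_cos_squared_add[of y] by algebra
    then show "0 < sin y / cos y + 11 * (sin_minus_x_cos y / (y * sin y))
        - 35 * (y * sin y / sin_minus_x_cos y - 2 / y - cos y / sin y)"
      using ln_deriv_ratio_upper_num_pos[OF y] pos y by simp
  next
    show "((\<lambda>y. neg_ln_cos y + 11 * neg_ln_sinc y - 35 * ln_deriv_ratio y) \<longlongrightarrow> 0) (at_right 0)"
      using tendsto_diff[OF tendsto_add[OF neg_ln_cos_tendsto_0 tendsto_mult[OF tendsto_const neg_ln_sinc_tendsto_0]]
          tendsto_mult[OF tendsto_const ln_deriv_ratio_tendsto_0]]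
      by simp
  qed
  then show ?thesis by simp
qed

lemma neg_ln_sinc_lt_neg_ln_cos:
  assumes "0 < x" "x < pi/2" shows "3 * neg_ln_sinc x < neg_ln_cos x"
proof -
  have "0 < neg_ln_cos x - 3 * neg_ln_sinc x"
  proof (rule DERIV_pos_tendsto_0_imp_pos[OF assms])
    fix y :: real assume y: "0 < y" "y < pi/2"
    note pos = quarter_period_pos[OF y]
    show "((\<lambda>y. neg_ln_cos y - 3 * neg_ln_sinc y) has_real_derivative
        sin y / cos y - 3 * (sin_minus_x_cos y / (y * sin y))) (at y)"
      by (intro DERIV_diff DERIV_cmult DERIV_neg_ln_cos DERIV_neg_ln_sinc y)
    have "sin y / cos y - 3 * (sin_minus_x_cos y / (y * sin y))
      = (2 * (2*y) - 3 * sin (2*y) + (2*y) * cos (2*y)) / (2 * y * sin y * cos y)"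
      using pos y unfolding sin_double cos_double
      apply (simp add: field_simps)
      unfolding sin_minus_x_cos_def using sin_cos_squared_add[of y] by algebra
    then show "0 < sin y / cos y - 3 * (sin_minus_x_cos y / (y * sin y))"
      using cusa_huygens[of "2*y"] pos y by simp
  next
    show "((\<lambda>y. neg_ln_cos y - 3 * neg_ln_sinc y) \<longlongrightarrow> 0) (at_right 0)"
      using tendsto_diff[OF neg_ln_cos_tendsto_0 tendsto_mult[OF tendsto_const neg_ln_sinc_tendsto_0]]
      by simp
  qed
  then show ?thesis by simp
qed

section \<open>The bound with the constant \<open>\<pi>\<^sup>2/4 - 2\<close>\<close>

lemma pi_squared_bounds: "9.8696 < pi\<^sup>2" "pi\<^sup>2 < 9.8697"
proof -
  have "3.1415926\<^sup>2 < pi\<^sup>2" using pi_approx(1) by (intro power_strict_mono) auto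
  then show "9.8696 < pi\<^sup>2" by (simp add: power2_eq_square)
  have "pi\<^sup>2 < 3.1415927\<^sup>2" using pi_approx(2) pi_gt_zero by (intro power_strict_mono) auto
  then show "pi\<^sup>2 < 9.8697" by (simp add: power2_eq_square)
qed

lemma quartic_pos:
  fixes u :: real
  assumes u: "0 \<le> u" "u \<le> 5476/625"
  shows "0 < 1/72 - 19/10080 * u + 11/201600 * u\<^sup>2 - 47/59875200 * u ^ 3 + 1/188697600 * u ^ 4"
proof -
  define U :: real where "U = 5476/625"
  define c :: real where "c = 11/201600 - 47/59875200 * U"
  \<comment> \<open>Bounding \<open>u\<^sup>3\<close> by \<open>U u\<^sup>2\<close> leaves a quadratic that is decreasing on \<open>[0, U]\<close> and positive at \<open>U\<close>.\<close>
  have "u * u\<^sup>2 \<le> U * u\<^sup>2" using u unfolding U_def by (intro mult_right_mono) auto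
  then have cubic: "47/59875200 * u ^ 3 \<le> 47/59875200 * U * u\<^sup>2"
    by (simp add: power3_eq_cube power2_eq_square)
  have "0 \<le> (U - u) * (19/10080 - c * (u + U))"
    using u unfolding c_def U_def by (intro mult_nonneg_nonneg) auto
  moreover have "0 < 1/72 - 19/10080 * U + c * U\<^sup>2"
    unfolding c_def U_def by (simp add: power2_eq_square)
  moreover have "(1/72 - 19/10080 * u + c * u\<^sup>2) - (1/72 - 19/10080 * U + c * U\<^sup>2)
      = (U - u) * (19/10080 - c * (u + U))"
    by algebra
  ultimately have "0 < 1/72 - 19/10080 * u + c * u\<^sup>2" by linarith
  moreover have "c * u\<^sup>2 = 11/201600 * u\<^sup>2 - 47/59875200 * U * u\<^sup>2"
    by (simp add: c_def algebra_simps)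
  moreover have "0 \<le> u ^ 4" using u by simp
  ultimately show ?thesis using cubic by linarith
qed

lemma trig_poly_pos_by_Taylor:
  fixes u :: real
  assumes u: "0 < u" "u \<le> 74/25"
  shows "0 < 148 - 23 * u\<^sup>2 - 58 * u * sin u + (7 * u\<^sup>2 - 148) * cos u"
proof -
  define S where "S = u - u^3/6 + u^5/120 - u^7/5040 + u^9/362880 - u^11/39916800 + u^13/6227020800"
  define C where "C = 1 - u^2/2 + u^4/24 - u^6/720 + u^8/40320 - u^10/3628800 + u^12/479001600"
  have "u \<le> pi" using u pi_approx by simp
  then have sin_le: "sin u \<le> S" and cos_le: "cos u \<le> C"
    using u sin_le_Maclaurin_sum[of u 3] cos_le_Maclaurin_sum[of u 3]
    by (simp_all add: S_def C_def lessThan_nat_numeral sin_coeff_def cos_coeff_def fact_numeral)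
  have u2: "u\<^sup>2 \<le> 5476/625"
    using power_mono[OF u(2), of 2] u by (simp add: power2_eq_square)
  have "148 - 23 * u\<^sup>2 - 58 * u * S + (7 * u\<^sup>2 - 148) * C
      \<le> 148 - 23 * u\<^sup>2 - 58 * u * sin u + (7 * u\<^sup>2 - 148) * cos u"
  proof -
    have "58 * u * sin u \<le> 58 * u * S" using sin_le u by simp
    moreover have "(7 * u\<^sup>2 - 148) * C \<le> (7 * u\<^sup>2 - 148) * cos u"
      using cos_le u2 by (intro mult_left_mono_neg) auto
    ultimately show ?thesis by linarith
  qed
  moreover have "148 - 23 * u\<^sup>2 - 58 * u * S + (7 * u\<^sup>2 - 148) * C =
     u ^ 6 * (1/72 - 19/10080 * u\<^sup>2 + 11/201600 * (u\<^sup>2)\<^sup>2 - 47/59875200 * (u\<^sup>2) ^ 3 + 1/188697600 * (u\<^sup>2) ^ 4)"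
    unfolding S_def C_def by algebra
  moreover have "0 < u ^ 6 * (1/72 - 19/10080 * u\<^sup>2 + 11/201600 * (u\<^sup>2)\<^sup>2 - 47/59875200 * (u\<^sup>2) ^ 3
      + 1/188697600 * (u\<^sup>2) ^ 4)"
    using quartic_pos[of "u\<^sup>2"] u2 u by simp
  ultimately show ?thesis by linarith
qed

text \<open>\<open>H r y / (y * sin_minus_x_cos y * sin y)\<close> is the derivative of \<open>r * neg_ln_sinc - ln_deriv_ratio\<close>.\<close>
definition H :: "real \<Rightarrow> real \<Rightarrow> real" where
  "H r x = sin_minus_x_cos x * ((1 - r) * x * cos x + (2 + r) * sin x) - x\<^sup>2 * (sin x)\<^sup>2"

lemma H_7_15: "H (7/15) x = (148 - 23 * (2*x)\<^sup>2 - 58 * (2*x) * sin (2*x) + (7 * (2*x)\<^sup>2 - 148) * cos (2*x)) / 120"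
  unfolding H_def sin_minus_x_cos_def sin_double cos_double
  using sin_cos_squared_add[of x] by algebra

lemma H_param: "H r x = H s x + (r - s) * (sin_minus_x_cos x)\<^sup>2"
  unfolding H_def sin_minus_x_cos_def by algebra

lemma H_pos_small:
  assumes "7/15 \<le> r" "0 < x" "x \<le> 37/25" shows "0 < H r x"
proof -
  have "0 < H (7/15) x" unfolding H_7_15 using trig_poly_pos_by_Taylor[of "2*x"] assms by simp
  then show ?thesis using H_param[of r x "7/15"] assms(1) by (simp add: add_pos_nonneg)
qed

lemma DERIV_H:
  "((H r) has_real_derivative 3 * sin_minus_x_cos x * cos x - x\<^sup>2 * sin x * cos x
     - (1 - 2 * r) * x * sin_minus_x_cos x * sin x) (at x)"
  unfolding H_def sin_minus_x_cos_def
  by (rule derivative_eq_intros refl | simp)+ (simp add: algebra_simps power2_eq_square)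

lemma sin_cos_near_pi_half:
  assumes "37/25 \<le> z" "z \<le> pi/2"
  shows "0 \<le> cos z" "cos z \<le> 0.0908" "0.9958 \<le> sin z"
proof -
  define t where "t = pi/2 - z"
  have t: "0 \<le> t" "t \<le> 0.0908" using assms pi_approx unfolding t_def by auto
  have cos_z: "cos z = sin t" unfolding t_def by (simp add: cos_sin_eq)
  have sin_z: "sin z = cos t" unfolding t_def by (simp add: sin_cos_eq)
  show "0 \<le> cos z" "cos z \<le> 0.0908"
    unfolding cos_z using sin_ge_zero[of t] sin_x_le_x[OF t(1)] t pi_gt3 by simp_all
  have "1 - t\<^sup>2/2 \<le> cos t"
    using cos_ge_Maclaurin_sum[of t 0] t pi_gt3 by (simp add: lessThan_nat_numeral cos_coeff_def)
  moreover have "t\<^sup>2 \<le> 0.0908\<^sup>2" using t by (intro power_mono) auto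
  ultimately show "0.9958 \<le> sin z" unfolding sin_z by (simp add: power2_eq_square)
qed

lemma DERIV_H_neg:
  assumes z: "37/25 \<le> z" "z \<le> pi/2"
  shows "3 * sin_minus_x_cos z * cos z - z\<^sup>2 * sin z * cos z
    - (1 - 2 * (pi\<^sup>2/4 - 2)) * z * sin_minus_x_cos z * sin z < 0"
proof -
  note bounds = sin_cos_near_pi_half[OF z]
  have "z * cos z \<le> 1.5708 * 0.0908" using z pi_approx bounds by (intro mult_mono) auto
  then have N_lower: "0.853 \<le> sin_minus_x_cos z" using bounds unfolding sin_minus_x_cos_def by simp
  have N_upper: "sin_minus_x_cos z \<le> sin z" using z bounds unfolding sin_minus_x_cos_def by simp
  have "(37/25)\<^sup>2 \<le> z\<^sup>2" using z by (intro power_mono) auto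
  then have z2: "2.1904 \<le> z\<^sup>2" by (simp add: power2_eq_square)
  have "3 * sin_minus_x_cos z - z\<^sup>2 * sin z \<le> sin z * (3 - z\<^sup>2)"
    using N_upper by (simp add: algebra_simps)
  also have "\<dots> \<le> 0.8096"
  proof (cases "0 \<le> 3 - z\<^sup>2")
    case True
    then have "sin z * (3 - z\<^sup>2) \<le> 1 * (3 - z\<^sup>2)" by (intro mult_right_mono) simp_all
    then show ?thesis using z2 by simp
  next
    case False
    then have "sin z * (3 - z\<^sup>2) \<le> 0" using bounds by (intro mult_nonneg_nonpos) simp_all
    then show ?thesis by simp
  qed
  finally have factor: "3 * sin_minus_x_cos z - z\<^sup>2 * sin z \<le> 0.8096" .
  have "cos z * (3 * sin_minus_x_cos z - z\<^sup>2 * sin z) \<le> 0.0908 * 0.8096"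
  proof (cases "0 \<le> 3 * sin_minus_x_cos z - z\<^sup>2 * sin z")
    case True
    then show ?thesis using factor bounds by (intro mult_mono) simp_all
  next
    case False
    then have "cos z * (3 * sin_minus_x_cos z - z\<^sup>2 * sin z) \<le> 0"
      using bounds by (intro mult_nonneg_nonpos) simp_all
    then show ?thesis by simp
  qed
  moreover have "0.0651 * 1.48 * 0.853 * 0.9958 \<le> (1 - 2 * (pi\<^sup>2/4 - 2)) * z * sin_minus_x_cos z * sin z"
    using pi_squared_bounds z N_lower bounds by (intro mult_mono) auto
  ultimately show ?thesis by (simp add: algebra_simps)
qed

lemma H_pos:
  assumes "0 < x" "x < pi/2" shows "0 < H (pi\<^sup>2/4 - 2) x"
proof (cases "x \<le> 37/25")
  case True
  then show ?thesis using H_pos_small[of "pi\<^sup>2/4 - 2" x] pi_squared_bounds assms by simp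
next
  case False
  have "H (pi\<^sup>2/4 - 2) (pi/2) < H (pi\<^sup>2/4 - 2) x"
  proof (rule DERIV_neg_imp_decreasing[OF assms(2)])
    fix z assume "x \<le> z" "z \<le> pi/2"
    then have "37/25 \<le> z" using False by simp
    then show "\<exists>y. (H (pi\<^sup>2/4 - 2) has_real_derivative y) (at z) \<and> y < 0"
      using DERIV_H[of "pi\<^sup>2/4 - 2" z] DERIV_H_neg[of z] \<open>z \<le> pi/2\<close> by blast
  qed
  moreover have "H (pi\<^sup>2/4 - 2) (pi/2) = 0"
    unfolding H_def sin_minus_x_cos_def by (simp add: power2_eq_square field_simps)
  ultimately show ?thesis by simp
qed

lemma ln_deriv_ratio_lt_pi:
  assumes "0 < x" "x < pi/2" shows "ln_deriv_ratio x < (pi\<^sup>2/4 - 2) * neg_ln_sinc x"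
proof -
  have "0 < (pi\<^sup>2/4 - 2) * neg_ln_sinc x - ln_deriv_ratio x"
  proof (rule DERIV_pos_tendsto_0_imp_pos[OF assms])
    fix y :: real assume y: "0 < y" "y < pi/2"
    note pos = quarter_period_pos[OF y]
    show "((\<lambda>y. (pi\<^sup>2/4 - 2) * neg_ln_sinc y - ln_deriv_ratio y) has_real_derivative
        (pi\<^sup>2/4 - 2) * (sin_minus_x_cos y / (y * sin y))
        - (y * sin y / sin_minus_x_cos y - 2 / y - cos y / sin y)) (at y)"
      by (intro DERIV_diff DERIV_cmult DERIV_ln_deriv_ratio DERIV_neg_ln_sinc y)
    have "(pi\<^sup>2/4 - 2) * (sin_minus_x_cos y / (y * sin y))
        - (y * sin y / sin_minus_x_cos y - 2 / y - cos y / sin y)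
      = H (pi\<^sup>2/4 - 2) y / (y * sin_minus_x_cos y * sin y)"
      using pos y unfolding H_def
      apply (simp add: field_simps)
      unfolding sin_minus_x_cos_def by algebra
    then show "0 < (pi\<^sup>2/4 - 2) * (sin_minus_x_cos y / (y * sin y))
        - (y * sin y / sin_minus_x_cos y - 2 / y - cos y / sin y)"
      using H_pos[OF y] pos y by simp
  next
    show "((\<lambda>y. (pi\<^sup>2/4 - 2) * neg_ln_sinc y - ln_deriv_ratio y) \<longlongrightarrow> 0) (at_right 0)"
      using tendsto_diff[OF tendsto_mult[OF tendsto_const neg_ln_sinc_tendsto_0] ln_deriv_ratio_tendsto_0]
      by simp
  qed
  then show ?thesis by simp
qed

section \<open>Comparing \<open>Fsin\<close> with \<open>Gcos\<close>\<close>

definition Phi :: "real \<Rightarrow> real \<Rightarrow> real" where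
  "Phi p t = (if p = 0 then t else (1 - exp (- p * t)) / p)"

lemma DERIV_Phi: "(Phi p has_real_derivative exp (- p * t)) (at t)"
proof (cases "p = 0")
  case True
  then have "Phi p = (\<lambda>t. t)" by (simp add: Phi_def fun_eq_iff)
  then show ?thesis using True by (simp add: DERIV_ident)
next
  case False
  then have "Phi p = (\<lambda>t. (1 - exp (- p * t)) / p)" by (simp add: Phi_def fun_eq_iff)
  then show ?thesis using False by (auto intro!: derivative_eq_intros)
qed

lemma Phi_0 [simp]: "Phi p 0 = 0"
  by (simp add: Phi_def)

lemma Phi_tendsto_0: "(f \<longlongrightarrow> 0) F \<Longrightarrow> ((\<lambda>y. Phi p (f y)) \<longlongrightarrow> 0) F"
  using isCont_tendsto_compose[OF DERIV_isCont[OF DERIV_Phi]] by fastforce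

lemma Phi_antimono:
  assumes "q \<le> q'" "0 \<le> t" shows "Phi q' t \<le> Phi q t"
proof -
  have "Phi q 0 - Phi q' 0 \<le> Phi q t - Phi q' t"
  proof (rule DERIV_nonneg_imp_nondecreasing[OF assms(2)])
    fix y :: real assume "0 \<le> y" "y \<le> t"
    then have "exp (- q' * y) \<le> exp (- q * y)" using assms(1) by (simp add: mult_right_mono)
    moreover have "((\<lambda>t. Phi q t - Phi q' t) has_real_derivative exp (- q * y) - exp (- q' * y)) (at y)"
      by (intro DERIV_diff DERIV_Phi)
    ultimately show "\<exists>d. ((\<lambda>t. Phi q t - Phi q' t) has_real_derivative d) (at y) \<and> 0 \<le> d"
      by auto
  qed
  then show ?thesis by simp
qed

lemma Fsin_eq_Phi: "0 < x \<Longrightarrow> x < pi/2 \<Longrightarrow> Fsin p x = Phi p (neg_ln_sinc x)"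
  using quarter_period_pos[of x]
  by (simp add: Fsin_def Phi_def neg_ln_sinc_def powr_def ln_div algebra_simps)

lemma Gcos_eq_Phi: "0 < x \<Longrightarrow> x < pi/2 \<Longrightarrow> Gcos q x = Phi q (neg_ln_cos x) / 3"
  using quarter_period_pos[of x]
  by (auto simp: Gcos_def Phi_def neg_ln_cos_def powr_def field_simps)

lemma Gcos_antimono: "q \<le> q' \<Longrightarrow> 0 < x \<Longrightarrow> x < pi/2 \<Longrightarrow> Gcos q' x \<le> Gcos q x"
  using Phi_antimono[of q q' "neg_ln_cos x"] neg_ln_cos_nonneg[of x] by (simp add: Gcos_eq_Phi)

lemma deriv_ratio:
  assumes y: "0 < y" "y < pi/2"
  shows "exp (- p * neg_ln_sinc y) * (sin_minus_x_cos y / (y * sin y))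
    = exp (ln_deriv_ratio y - (p - 1) * neg_ln_sinc y + (q - 1) * neg_ln_cos y)
      * (exp (- q * neg_ln_cos y) * (sin y / cos y) / 3)"
proof -
  note pos = quarter_period_pos[OF y]
  have "exp (neg_ln_cos y) = 1 / cos y"
    using pos by (simp add: neg_ln_cos_def exp_minus inverse_eq_divide)
  then have Gcos_deriv: "exp (- q * neg_ln_cos y) * (sin y / cos y) / 3
      = exp (- q * neg_ln_cos y + ln (sin y) - ln 3 + neg_ln_cos y)"
    using pos by (simp add: exp_add exp_diff exp_minus field_simps)
  have "exp (- p * neg_ln_sinc y) * (sin_minus_x_cos y / (y * sin y))
      = exp (- p * neg_ln_sinc y + ln (sin_minus_x_cos y) - ln y - ln (sin y))"
    using pos y by (simp add: exp_add exp_diff exp_minus field_simps)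
  also have "\<dots> = exp ((ln_deriv_ratio y - (p - 1) * neg_ln_sinc y + (q - 1) * neg_ln_cos y)
      + (- q * neg_ln_cos y + ln (sin y) - ln 3 + neg_ln_cos y))"
    unfolding ln_deriv_ratio_def neg_ln_sinc_def by (simp add: algebra_simps)
  also have "\<dots> = exp (ln_deriv_ratio y - (p - 1) * neg_ln_sinc y + (q - 1) * neg_ln_cos y)
      * (exp (- q * neg_ln_cos y) * (sin y / cos y) / 3)"
    unfolding exp_add Gcos_deriv ..
  finally show ?thesis .
qed

lemma Gcos_less_Fsin:
  assumes gap: "\<And>y. 0 < y \<Longrightarrow> y < pi/2 \<Longrightarrow> 0 < ln_deriv_ratio y - (p - 1) * neg_ln_sinc y + (q - 1) * neg_ln_cos y"
    and x: "0 < x" "x < pi/2"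
  shows "Gcos q x < Fsin p x"
proof -
  have "0 < Phi p (neg_ln_sinc x) - Phi q (neg_ln_cos x) / 3"
  proof (rule DERIV_pos_tendsto_0_imp_pos[OF x])
    fix y :: real assume y: "0 < y" "y < pi/2"
    show "((\<lambda>y. Phi p (neg_ln_sinc y) - Phi q (neg_ln_cos y) / 3) has_real_derivative
        exp (- p * neg_ln_sinc y) * (sin_minus_x_cos y / (y * sin y))
        - exp (- q * neg_ln_cos y) * (sin y / cos y) / 3) (at y)"
      by (intro DERIV_diff DERIV_cdivide DERIV_chain2[OF DERIV_Phi] DERIV_neg_ln_sinc DERIV_neg_ln_cos y)
    have "1 < exp (ln_deriv_ratio y - (p - 1) * neg_ln_sinc y + (q - 1) * neg_ln_cos y)"
      using gap[OF y] by simp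
    moreover have "0 < exp (- q * neg_ln_cos y) * (sin y / cos y) / 3" using quarter_period_pos[OF y] by simp
    ultimately show "0 < exp (- p * neg_ln_sinc y) * (sin_minus_x_cos y / (y * sin y))
        - exp (- q * neg_ln_cos y) * (sin y / cos y) / 3"
      unfolding deriv_ratio[OF y, of p q] diff_gt_0_iff_gt by (metis mult_strict_right_mono mult_1)
  next
    show "((\<lambda>y. Phi p (neg_ln_sinc y) - Phi q (neg_ln_cos y) / 3) \<longlongrightarrow> 0) (at_right 0)"
      using tendsto_diff[OF Phi_tendsto_0[OF neg_ln_sinc_tendsto_0]
          tendsto_divide_zero[OF Phi_tendsto_0[OF neg_ln_cos_tendsto_0]]] by simp
  qed
  then show ?thesis using x by (simp add: Fsin_eq_Phi Gcos_eq_Phi)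
qed

lemma Fsin_less_Gcos:
  assumes gap: "\<And>y. 0 < y \<Longrightarrow> y < pi/2 \<Longrightarrow> ln_deriv_ratio y - (p - 1) * neg_ln_sinc y + (q - 1) * neg_ln_cos y < 0"
    and x: "0 < x" "x < pi/2"
  shows "Fsin p x < Gcos q x"
proof -
  have "0 < Phi q (neg_ln_cos x) / 3 - Phi p (neg_ln_sinc x)"
  proof (rule DERIV_pos_tendsto_0_imp_pos[OF x])
    fix y :: real assume y: "0 < y" "y < pi/2"
    show "((\<lambda>y. Phi q (neg_ln_cos y) / 3 - Phi p (neg_ln_sinc y)) has_real_derivative
        exp (- q * neg_ln_cos y) * (sin y / cos y) / 3
        - exp (- p * neg_ln_sinc y) * (sin_minus_x_cos y / (y * sin y))) (at y)"
      by (intro DERIV_diff DERIV_cdivide DERIV_chain2[OF DERIV_Phi] DERIV_neg_ln_sinc DERIV_neg_ln_cos y)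
    have "exp (ln_deriv_ratio y - (p - 1) * neg_ln_sinc y + (q - 1) * neg_ln_cos y) < 1"
      using gap[OF y] by simp
    moreover have "0 < exp (- q * neg_ln_cos y) * (sin y / cos y) / 3" using quarter_period_pos[OF y] by simp
    ultimately show "0 < exp (- q * neg_ln_cos y) * (sin y / cos y) / 3
        - exp (- p * neg_ln_sinc y) * (sin_minus_x_cos y / (y * sin y))"
      unfolding deriv_ratio[OF y, of p q] diff_gt_0_iff_gt by (metis mult_strict_right_mono mult_1)
  next
    show "((\<lambda>y. Phi q (neg_ln_cos y) / 3 - Phi p (neg_ln_sinc y)) \<longlongrightarrow> 0) (at_right 0)"
      using tendsto_diff[OF tendsto_divide_zero[OF Phi_tendsto_0[OF neg_ln_cos_tendsto_0]]
          Phi_tendsto_0[OF neg_ln_sinc_tendsto_0]] by simp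
  qed
  then show ?thesis using x by (simp add: Fsin_eq_Phi Gcos_eq_Phi)
qed

lemma Fsin_less_Gcos_1:
  assumes "pi\<^sup>2/4 - 1 \<le> p" "0 < x" "x < pi/2" shows "Fsin p x < Gcos 1 x"
proof (rule Fsin_less_Gcos[OF _ assms(2,3)])
  fix y :: real assume y: "0 < y" "y < pi/2"
  have "(pi\<^sup>2/4 - 2) * neg_ln_sinc y \<le> (p - 1) * neg_ln_sinc y"
    using neg_ln_sinc_nonneg[OF y] assms(1) by (intro mult_right_mono) auto
  then show "ln_deriv_ratio y - (p - 1) * neg_ln_sinc y + (1 - 1) * neg_ln_cos y < 0"
    using ln_deriv_ratio_lt_pi[OF y] by simp
qed

lemma Fsin_less_Gcos_34_35:
  assumes "46/35 \<le> p" "0 < x" "x < pi/2" shows "Fsin p x < Gcos (34/35) x"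
proof (rule Fsin_less_Gcos[OF _ assms(2,3)])
  fix y :: real assume y: "0 < y" "y < pi/2"
  have "11/35 * neg_ln_sinc y \<le> (p - 1) * neg_ln_sinc y"
    using neg_ln_sinc_nonneg[OF y] assms(1) by (intro mult_right_mono) auto
  then show "ln_deriv_ratio y - (p - 1) * neg_ln_sinc y + (34/35 - 1) * neg_ln_cos y < 0"
    using ln_deriv_ratio_lt[OF y] by simp
qed

lemma Gcos_1_less_Fsin:
  assumes "p < 7/5" "0 < x" "x < pi/2" shows "Gcos 1 x < Fsin p x"
proof (rule Gcos_less_Fsin[OF _ assms(2,3)])
  fix y :: real assume y: "0 < y" "y < pi/2"
  have "(p - 1) * neg_ln_sinc y \<le> 2/5 * neg_ln_sinc y"
    using neg_ln_sinc_nonneg[OF y] assms(1) by (intro mult_right_mono) auto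
  then show "0 < ln_deriv_ratio y - (p - 1) * neg_ln_sinc y + (1 - 1) * neg_ln_cos y"
    using ln_deriv_ratio_gt[OF y] by simp
qed

lemma Gcos_affine_less_Fsin:
  assumes "7/5 \<le> p" "0 < x" "x < pi/2" shows "Gcos (p/3 + 8/15) x < Fsin p x"
proof (rule Gcos_less_Fsin[OF _ assms(2,3)])
  fix y :: real assume y: "0 < y" "y < pi/2"
  have "ln_deriv_ratio y - (p - 1) * neg_ln_sinc y + (p/3 + 8/15 - 1) * neg_ln_cos y
      = (ln_deriv_ratio y - 2/5 * neg_ln_sinc y) + (p - 7/5) * (neg_ln_cos y / 3 - neg_ln_sinc y)"
    by (simp add: field_simps)
  moreover have "0 \<le> (p - 7/5) * (neg_ln_cos y / 3 - neg_ln_sinc y)"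
    using assms(1) neg_ln_sinc_lt_neg_ln_cos[OF y] by simp
  ultimately show "0 < ln_deriv_ratio y - (p - 1) * neg_ln_sinc y + (p/3 + 8/15 - 1) * neg_ln_cos y"
    using ln_deriv_ratio_gt[OF y] by simp
qed

lemma Fsin_less_Gcos_affine:
  assumes "p < 46/35" "0 < x" "x < pi/2" shows "Fsin p x < Gcos (p/3 + 8/15) x"
proof (rule Fsin_less_Gcos[OF _ assms(2,3)])
  fix y :: real assume y: "0 < y" "y < pi/2"
  have "ln_deriv_ratio y - (p - 1) * neg_ln_sinc y + (p/3 + 8/15 - 1) * neg_ln_cos y
      = (ln_deriv_ratio y - 11/35 * neg_ln_sinc y - neg_ln_cos y / 35)
        + (p - 46/35) * (neg_ln_cos y / 3 - neg_ln_sinc y)"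
    by (simp add: field_simps)
  moreover have "(p - 46/35) * (neg_ln_cos y / 3 - neg_ln_sinc y) \<le> 0"
    using assms(1) neg_ln_sinc_lt_neg_ln_cos[OF y] by (simp add: mult_nonpos_nonneg)
  ultimately show "ln_deriv_ratio y - (p - 1) * neg_ln_sinc y + (p/3 + 8/15 - 1) * neg_ln_cos y < 0"
    using ln_deriv_ratio_lt[OF y] by simp
qed

lemma double_ineqI:
  assumes "0 < x" "x < pi/2" "b \<le> q2" "q1 \<le> a"
    and "Gcos b x < Fsin p x" "Fsin p x < Gcos a x"
  shows "double_ineq p q1 q2 x"
  using Gcos_antimono[of b q2 x] Gcos_antimono[of q1 a x] assms unfolding double_ineq_def by linarith

theorem theorem2:
  shows "(\<forall>p q1 q2 x::real. p \<ge> pi\<^sup>2 / 4 - 1 \<and> q2 \<ge> p / 3 + 8 / 15 \<and> q1 \<le> 1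
            \<and> 0 < x \<and> x < pi / 2 \<longrightarrow> double_ineq p q1 q2 x)
       \<and> (\<forall>p q1 q2 x::real. 7 / 5 \<le> p \<and> p < pi\<^sup>2 / 4 - 1 \<and> q2 \<ge> p / 3 + 8 / 15 \<and> q1 \<le> 34 / 35
            \<and> 0 < x \<and> x < pi / 2 \<longrightarrow> double_ineq p q1 q2 x)
       \<and> (\<forall>p q1 q2 x::real. 46 / 35 \<le> p \<and> p < 7 / 5 \<and> q2 \<ge> 1 \<and> q1 \<le> 34 / 35
            \<and> 0 < x \<and> x < pi / 2 \<longrightarrow> double_ineq p q1 q2 x)
       \<and> (\<forall>p q1 q2 x::real. p < 46 / 35 \<and> q2 \<ge> 1 \<and> q1 \<le> p / 3 + 8 / 15
            \<and> 0 < x \<and> x < pi / 2 \<longrightarrow> double_ineq p q1 q2 x)"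
proof (intro conjI allI impI; elim conjE)
  have pi_bound: "7/5 < pi\<^sup>2/4 - 1" using pi_squared_bounds by simp
  fix p q1 q2 x :: real
  show "double_ineq p q1 q2 x"
    if "p \<ge> pi\<^sup>2 / 4 - 1" "q2 \<ge> p / 3 + 8 / 15" "q1 \<le> 1" "0 < x" "x < pi / 2"
    using that pi_bound by (intro double_ineqI[OF _ _ _ _ Gcos_affine_less_Fsin Fsin_less_Gcos_1]) auto
  show "double_ineq p q1 q2 x"
    if "7 / 5 \<le> p" "p < pi\<^sup>2 / 4 - 1" "q2 \<ge> p / 3 + 8 / 15" "q1 \<le> 34 / 35" "0 < x" "x < pi / 2"
    using that by (intro double_ineqI[OF _ _ _ _ Gcos_affine_less_Fsin Fsin_less_Gcos_34_35]) auto
  show "double_ineq p q1 q2 x"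
    if "46 / 35 \<le> p" "p < 7 / 5" "q2 \<ge> 1" "q1 \<le> 34 / 35" "0 < x" "x < pi / 2"
    using that by (intro double_ineqI[OF _ _ _ _ Gcos_1_less_Fsin Fsin_less_Gcos_34_35]) auto
  show "double_ineq p q1 q2 x"
    if "p < 46 / 35" "q2 \<ge> 1" "q1 \<le> p / 3 + 8 / 15" "0 < x" "x < pi / 2"
    using that by (intro double_ineqI[OF _ _ _ _ Gcos_1_less_Fsin Fsin_less_Gcos_affine]) auto
qed

end
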